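(* Let $\mathbb A$ be the $Q$-MCR algebra described in the context. Assume that $\widetilde Q(x_1,x_2)$ is invertible for all $(x_1,x_2)\in X^2$ and that there is $\varkappa\in\mathbb R$ with $\operatorname{Tr}(\widetilde Q(x,x)^{-1}v^{(2)})=\varkappa\operatorname{Tr}v^{(2)}$ for all $x\in X$, $v^{(2)}\in V^{\otimes2}$. Let $\sharp_1,\dots,\sharp_n\in\{+,-\}$ with $\sharp_i=+$, $\sharp_{i+1}=-$ for some $i\in\{1,\dots,n-1\}$. Then for all $f^{(n)}\in\mathfrak F^{(n)}$, $$\Phi(f^{(n)};\sharp_1,\dots,\sharp_n)=\Phi\big(\widetilde Q_i(x_i,x_{i+1})^{-1}f^{(n)}(x_1,\dots,x_{i+1},x_i,\dots,x_n);\sharp_1,\dots,\sharp_{i+1},\sharp_i,\dots,\sharp_n\big)-\varkappa\,\Phi(g^{(n-2)};\sharp_1,\dots,\sharp_{i-1},\sharp_{i+2},\dots,\sharp_n),$$ where $g^{(n-2)}(x_1,\dots,x_{n-2})=\int_X\operatorname{Tr}_if^{(n)}(x_1,\dots,x_{i-1},x,x,x_i,\dots,x_{n-2})\,dx$.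
   Context: Let $d\ge2$, $X=\mathbb R^d$, $x=(y,z)$ with $y\in Y:=\mathbb R$, $z\in Z:=\mathbb R^{d-1}$. $V=\mathbb C^r$ with standard basis $e_1,\dots,e_r$, $J$ complex conjugation, $\langle u,v\rangle_{V^{\otimes n}}:=(u,Jv)$. $Q:Y^2\to\mathcal L(V^{\otimes2})$ continuous, unitary-valued, $Q(y_1,y_2)^*=Q(y_2,y_1)$, satisfying $Q_1(y_1,y_2)Q_2(y_1,y_3)Q_1(y_2,y_3)=Q_2(y_2,y_3)Q_1(y_1,y_3)Q_2(y_1,y_2)$, where $C_i$ is $C\in\mathcal L(V^{\otimes2})$ acting on factors $i,i+1$. $Q(x_1,x_2):=Q(y_1,y_2)$. $\mathbb S^{(n)}(v_1\otimes\cdots\otimes v_n)=Jv_n\otimes\cdots\otimes Jv_1$ (antilinear); $\widehat Q(x_1,x_2)=\mathbb S^{(2)}Q(x_2,x_1)\mathbb S^{(2)}$; $\langle\widetilde Q(x_1,x_2)e_i\otimes e_j,e_k\otimes e_l\rangle=\langle Q(x_1,x_2)e_k\otimes e_i,e_l\otimes e_j\rangle$. $\operatorname{Tr}(v)=\sum_k(v,e_k\otimes e_k)$ on $V^{\otimes2}$, $\operatorname{Tr}_i$ applies it to factors $i,i+1$ of $V^{\otimes n}$. $\mathcal G=L^2(Z)$; $\mathfrak F^{(n)}$ is the span of $\varphi(y_1..y_n)g_1(z_1)\cdots g_n(z_n)$, $\varphi\in C_0(Y^n;V^{\otimes n})$, $g_i\in\mathcal G$. $\mathbb A$ is the unital $*$-algebra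 spanned by $\mathbf 1$ and $\Phi(f^{(n)};\sharp_1..\sharp_n)$, linear in $f^{(n)}\in\mathfrak F^{(n)}$, with product given by tensoring kernels and concatenating signs, involution $\Phi(f;\sharp_1..\sharp_n)^*=\Phi(\mathbb S^{(n)}f(x_n..x_1);-\sharp_n..-\sharp_1)$, and relations: for $\sharp_i=\sharp_{i+1}=+$: $\Phi(f;\sharp)=\Phi(Q_i(x_i,x_{i+1})f(..,x_{i+1},x_i,..);\sharp)$; for $\sharp_i=\sharp_{i+1}=-$: same with $\widehat Q_i(x_i,x_{i+1})$; for $\sharp_i=-,\sharp_{i+1}=+$: $\Phi(f;\sharp)=\Phi(\widetilde Q_i(x_{i+1},x_i)f(..,x_{i+1},x_i,..);\sharp_1..\sharp_{i+1},\sharp_i..\sharp_n)+\Phi(g^{(n-2)};\sharp_1..\sharp_{i-1},\sharp_{i+2}..\sharp_n)$ with $g^{(n-2)}$ as in the claim. *)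

theory Defs
  imports "HOL-Analysis.Analysis"
begin

text \<open>
V = C^r with basis indexed by a finite type 'r.  An element of V^{\<otimes>n} is represented
  by its coefficient function on index words: v :: 'r list \<Rightarrow> complex (only words of length n
  matter).  Operators on V^{\<otimes>2} are matrices complex^('r\<times>'r)^('r\<times>'r), row index first.
  X = R^d = Y \<times> Z with Y = R and Z = real^'z ('z finite, so d = 1 + CARD('z) \<ge> 2).
  Positions i are 1-based as in the paper: factors i,i+1 are list positions i-1, i.
  Signs: True = +, False = -.
\<close>

type_synonym 'r tens = "'r list \<Rightarrow> complex"
type_synonym 'r op2 = "complex^('r \<times> 'r)^('r \<times> 'r)"
type_synonym ('z,'r) kernel = "(real \<times> (real^'z)) list \<Rightarrow> 'r tens"

definition act_at :: "('r::finite) op2 \<Rightarrow> nat \<Rightarrow> 'r tens \<Rightarrow> 'r tens" where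
  "act_at A i v w = (\<Sum>p\<in>UNIV. A $ (w ! (i-1), w ! i) $ p * v (w[i-1 := fst p, i := snd p]))"

definition swap_at :: "nat \<Rightarrow> 'b list \<Rightarrow> 'b list" where
  "swap_at i xs = xs[i-1 := xs ! i, i := xs ! (i-1)]"

definition del2_at :: "nat \<Rightarrow> 'b list \<Rightarrow> 'b list" where
  "del2_at i xs = take (i-1) xs @ drop (i+1) xs"

definition kswap :: "nat \<Rightarrow> ('z,'r) kernel \<Rightarrow> ('z,'r) kernel" where
  "kswap i f = (\<lambda>xs. f (swap_at i xs))"

definition kop :: "((real \<times> (real^'z)) \<Rightarrow> (real \<times> (real^'z)) \<Rightarrow> ('r::finite) op2) \<Rightarrow> nat
     \<Rightarrow> ('z,'r) kernel \<Rightarrow> ('z,'r) kernel" where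
  "kop A i f = (\<lambda>xs. act_at (A (xs ! (i-1)) (xs ! i)) i (f xs))"

definition trace_at :: "nat \<Rightarrow> ('r::finite) tens \<Rightarrow> 'r tens" where
  "trace_at i v w = (\<Sum>k\<in>UNIV. v (take (i-1) w @ [k, k] @ drop (i-1) w))"

definition Tr2 :: "complex^('r::finite \<times> 'r) \<Rightarrow> complex" where
  "Tr2 v = (\<Sum>k\<in>UNIV. v $ (k, k))"

definition gker :: "nat \<Rightarrow> ('z::finite,'r::finite) kernel \<Rightarrow> ('z,'r) kernel" where
  "gker i f = (\<lambda>xs w. integral\<^sup>L lborel
      (\<lambda>x::real \<times> (real^'z). trace_at i (f (take (i-1) xs @ [x, x] @ drop (i-1) xs)) w))"

text \<open>Tilde Q: <Qt e_i\<otimes>e_j, e_k\<otimes>e_l> = <Q e_k\<otimes>e_i, e_l\<otimes>e_j>.\<close>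
definition Qtilde :: "('r::finite) op2 \<Rightarrow> 'r op2" where
  "Qtilde A = (\<chi> p q. A $ (snd p, snd q) $ (fst p, fst q))"

text \<open>Hat: S^{(2)} A S^{(2)}, S^{(2)} the antilinear map e_a\<otimes>e_b \<mapsto> e_b\<otimes>e_a.\<close>
definition Qhat :: "('r::finite) op2 \<Rightarrow> 'r op2" where
  "Qhat A = (\<chi> p q. cnj (A $ (snd p, fst p) $ (snd q, fst q)))"

definition cadj :: "('r::finite) op2 \<Rightarrow> 'r op2" where
  "cadj A = (\<chi> p q. cnj (A $ q $ p))"

definition kadd :: "('z,'r) kernel \<Rightarrow> ('z,'r) kernel \<Rightarrow> ('z,'r) kernel" where
  "kadd f g = (\<lambda>xs w. f xs w + g xs w)"

definition kscale :: "complex \<Rightarrow> ('z,'r) kernel \<Rightarrow> ('z,'r) kernel" where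
  "kscale c f = (\<lambda>xs w. c * f xs w)"

definition ktens :: "nat \<Rightarrow> ('z,'r) kernel \<Rightarrow> ('z,'r) kernel \<Rightarrow> ('z,'r) kernel" where
  "ktens n f g = (\<lambda>xs w. f (take n xs) (take n w) * g (drop n xs) (drop n w))"

text \<open>S^{(n)} f(x_n,..,x_1), S^{(n)} antilinear with e_{w1}\<otimes>..\<otimes>e_{wn} \<mapsto> e_{wn}\<otimes>..\<otimes>e_{w1}.\<close>
definition kstar :: "('z,'r) kernel \<Rightarrow> ('z,'r) kernel" where
  "kstar f = (\<lambda>xs w. cnj (f (rev xs) (rev w)))"

definition C0 :: "nat \<Rightarrow> (real list \<Rightarrow> 'r tens) \<Rightarrow> bool" where
  "C0 n \<phi> \<longleftrightarrow>
     (\<forall>ys w. (length ys \<noteq> n \<or> length w \<noteq> n) \<longrightarrow> \<phi> ys w = 0) \<and>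
     (\<forall>ys. length ys = n \<longrightarrow> (\<forall>e>0. \<exists>d>0. \<forall>ys'. length ys' = n \<and> (\<forall>j<n. \<bar>ys' ! j - ys ! j\<bar> < d)
          \<longrightarrow> (\<forall>w. cmod (\<phi> ys' w - \<phi> ys w) < e))) \<and>
     (\<exists>R. \<forall>ys. length ys = n \<and> (\<exists>j<n. \<bar>ys ! j\<bar> > R) \<longrightarrow> (\<forall>w. \<phi> ys w = 0))"

definition L2Z :: "(real^'z::finite \<Rightarrow> complex) \<Rightarrow> bool" where
  "L2Z g \<longleftrightarrow> g \<in> borel_measurable lborel \<and> integrable lborel (\<lambda>z. (cmod (g z))\<^sup>2)"

definition genker :: "nat \<Rightarrow> (real list \<Rightarrow> 'r tens) \<Rightarrow> (nat \<Rightarrow> real^'z \<Rightarrow> complex) \<Rightarrow> ('z,'r) kernel" where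
  "genker n \<phi> gs = (\<lambda>xs w. if length xs = n \<and> length w = n
       then \<phi> (map fst xs) w * (\<Prod>j<n. gs j (snd (xs ! j))) else 0)"

definition Fn :: "nat \<Rightarrow> ('z::finite,'r) kernel set" where
  "Fn n = {f. \<exists>(m::nat) \<phi>s gss. (\<forall>j<m. C0 n (\<phi>s j) \<and> (\<forall>k<n. L2Z (gss j k))) \<and>
              f = (\<lambda>xs w. \<Sum>j<m. genker n (\<phi>s j) (gss j) xs w)}"

definition Q_admissible :: "(real \<Rightarrow> real \<Rightarrow> ('r::finite) op2) \<Rightarrow> bool" where
  "Q_admissible Q \<longleftrightarrow>
     continuous_on UNIV (\<lambda>p. Q (fst p) (snd p)) \<and>
     (\<forall>y1 y2. Q y1 y2 ** cadj (Q y1 y2) = mat 1 \<and> cadj (Q y1 y2) ** Q y1 y2 = mat 1) \<and>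
     (\<forall>y1 y2. cadj (Q y1 y2) = Q y2 y1) \<and>
     (\<forall>y1 y2 y3 v w. length w = 3 \<longrightarrow>
        act_at (Q y1 y2) 1 (act_at (Q y1 y3) 2 (act_at (Q y2 y3) 1 v)) w =
        act_at (Q y2 y3) 2 (act_at (Q y1 y3) 1 (act_at (Q y1 y2) 2 v)) w)"

text \<open>A unital complex *-algebra ('a, scalar multiplication sc, involution st) together with
  \<Phi> satisfying the defining relations of the Q-MCR algebra, and generated by 1 and the \<Phi>'s.\<close>
definition QMCR_algebra ::
  "(real \<Rightarrow> real \<Rightarrow> ('r::finite) op2) \<Rightarrow> (complex \<Rightarrow> 'a::ring_1 \<Rightarrow> 'a) \<Rightarrow> ('a \<Rightarrow> 'a)
     \<Rightarrow> (('z::finite,'r) kernel \<Rightarrow> bool list \<Rightarrow> 'a) \<Rightarrow> bool" where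
  "QMCR_algebra Q sc st \<Phi> \<longleftrightarrow>
     vector_space sc \<and>
     (\<forall>c a b. sc c (a * b) = sc c a * b \<and> sc c (a * b) = a * sc c b) \<and>
     (\<forall>a b. st (a + b) = st a + st b) \<and> (\<forall>c a. st (sc c a) = sc (cnj c) (st a)) \<and>
     (\<forall>a b. st (a * b) = st b * st a) \<and> (\<forall>a. st (st a) = a) \<and>
     module.span sc (insert 1 {\<Phi> f ss | f ss. f \<in> Fn (length ss)}) = UNIV \<and>
     (\<forall>f. \<Phi> f [] = sc (f [] []) 1) \<and>
     (\<forall>ss f g. f \<in> Fn (length ss) \<longrightarrow> g \<in> Fn (length ss) \<longrightarrow>
        \<Phi> (kadd f g) ss = \<Phi> f ss + \<Phi> g ss) \<and>
     (\<forall>ss c f. f \<in> Fn (length ss) \<longrightarrow> \<Phi> (kscale c f) ss = sc c (\<Phi> f ss)) \<and>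
     (\<forall>ss ts f g. f \<in> Fn (length ss) \<longrightarrow> g \<in> Fn (length ts) \<longrightarrow>
        \<Phi> f ss * \<Phi> g ts = \<Phi> (ktens (length ss) f g) (ss @ ts)) \<and>
     (\<forall>ss f. f \<in> Fn (length ss) \<longrightarrow> st (\<Phi> f ss) = \<Phi> (kstar f) (rev (map Not ss))) \<and>
     (\<forall>ss f i. f \<in> Fn (length ss) \<longrightarrow> 1 \<le> i \<longrightarrow> i < length ss \<longrightarrow>
        ss ! (i-1) \<longrightarrow> ss ! i \<longrightarrow>
        \<Phi> f ss = \<Phi> (kop (\<lambda>x1 x2. Q (fst x1) (fst x2)) i (kswap i f)) ss) \<and>
     (\<forall>ss f i. f \<in> Fn (length ss) \<longrightarrow> 1 \<le> i \<longrightarrow> i < length ss \<longrightarrow>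
        \<not> ss ! (i-1) \<longrightarrow> \<not> ss ! i \<longrightarrow>
        \<Phi> f ss = \<Phi> (kop (\<lambda>x1 x2. Qhat (Q (fst x2) (fst x1))) i (kswap i f)) ss) \<and>
     (\<forall>ss f i. f \<in> Fn (length ss) \<longrightarrow> 1 \<le> i \<longrightarrow> i < length ss \<longrightarrow>
        \<not> ss ! (i-1) \<longrightarrow> ss ! i \<longrightarrow>
        \<Phi> f ss = \<Phi> (kop (\<lambda>x1 x2. Qtilde (Q (fst x2) (fst x1))) i (kswap i f)) (swap_at i ss)
                 + \<Phi> (gker i f) (del2_at i ss))"

end

theory Submission
  imports Defs
begin

text \<open>Write Qt for tilde Q and h for the kernel Qt_i(x_i,x_{i+1})^{-1} f(..,x_{i+1},x_i,..) and apply the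
  (-,+) exchange relation to h with the signs at i, i+1 exchanged. In its first term Qt_i cancels
  Qt_i^{-1} and gives back f. Its second term integrates Tr_i h over the diagonal x_i = x_{i+1},
  where h is Qt_i(x,x)^{-1} f, so the trace condition turns it into kappa g.
  The real work is that h and g are again kernels in F, as the relations of the algebra require:
  Qt^{-1} is continuous by Cramer's rule, and by Fubini the diagonal integral of a generating
  kernel is a continuous compactly supported kernel in the Y-variables times the Z-integral of
  g_i g_{i+1}, which is finite since |g_i g_{i+1}| <= |g_i|^2 + |g_{i+1}|^2.\<close>

section \<open>Operators acting on two tensor factors\<close>

lemma act_at_eq_0: "(\<And>u. length u = length w \<Longrightarrow> v u = 0) \<Longrightarrow> act_at A i v w = 0"
  by (simp add: act_at_def)

lemma act_at_act_at:
  assumes "1 \<le> i" "i < length w"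
  shows "act_at A i (act_at B i v) w = act_at (A ** B) i v w"
proof -
  have nth_upd: "w[i-1 := a, i := b] ! (i-1) = a" "w[i-1 := a, i := b] ! i = b" for a b
    using assms by (simp_all add: nth_list_update)
  have upd_upd: "w[i-1 := a, i := b, i-1 := c, i := d] = w[i-1 := c, i := d]" for a b c d
    using assms by (metis diff_less less_numeral_extra(1) list_update_overwrite list_update_swap
        nat_neq_iff order_less_le_trans)
  have "act_at A i (act_at B i v) w =
     (\<Sum>p\<in>UNIV. A $ (w ! (i-1), w ! i) $ p * (\<Sum>q\<in>UNIV. B $ p $ q * v (w[i-1 := fst q, i := snd q])))"
    unfolding act_at_def nth_upd upd_upd prod.collapse by (rule refl)
  also have "\<dots> = (\<Sum>q\<in>UNIV. (\<Sum>p\<in>UNIV. A $ (w ! (i-1), w ! i) $ p * B $ p $ q) * v (w[i-1 := fst q, i := snd q]))"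
    by (simp only: sum_distrib_left sum_distrib_right mult.assoc) (rule sum.swap)
  also have "\<dots> = act_at (A ** B) i v w"
    unfolding act_at_def by (simp add: matrix_matrix_mult_def)
  finally show ?thesis .
qed

lemma act_at_mat_1:
  assumes "1 \<le> i" "i < length w"
  shows "act_at (mat 1) i v w = v w"
proof -
  have "act_at (mat 1) i v w =
      (\<Sum>p\<in>UNIV. if (w ! (i-1), w ! i) = p then v (w[i-1 := fst p, i := snd p]) else 0)"
    unfolding act_at_def by (intro sum.cong) (auto simp: mat_def)
  also have "\<dots> = v (w[i-1 := w ! (i-1), i := w ! i])"
    by (subst sum.delta') auto
  finally show ?thesis by simp
qed

lemma act_at_sum: "act_at A i (\<lambda>u. \<Sum>j\<in>J. g j u) w = (\<Sum>j\<in>J. act_at A i (g j) w)"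
  unfolding act_at_def by (simp only: sum_distrib_left) (rule sum.swap)

lemma act_at_mult_right: "act_at A i (\<lambda>u. v u * c) w = act_at A i v w * c"
  unfolding act_at_def by (simp add: sum_distrib_right mult.assoc)

lemma matrix_vector_mult_axis: "(M *v axis p (1::'a::comm_semiring_1)) $ q = M $ q $ p"
  by (simp add: matrix_vector_mult_def axis_def if_distrib cong: if_cong)

lemma Tr2_axis: "Tr2 (axis p 1) = (if fst p = snd p then 1 else 0)"
proof (cases p)
  case (Pair a b)
  then show ?thesis by (cases "a = b") (auto simp: Tr2_def axis_def intro!: sum.neutral)
qed

lemma sum_UNIV_prod:
  "(\<Sum>p\<in>(UNIV::('a::finite \<times> 'b::finite) set). F p) = (\<Sum>a\<in>UNIV. \<Sum>b\<in>UNIV. F (a, b))"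
  using sum.cartesian_product[of "\<lambda>a b. F (a, b)" UNIV UNIV] by simp

text \<open>Testing the trace condition on the basis vectors e_a (x) e_b gives
  sum_k M_(k,k),(a,b) = c delta_ab, which is all that Tr_i sees of M_i.\<close>
lemma trace_at_act_at:
  fixes M :: "('r::finite) op2"
  assumes M: "\<forall>v. Tr2 (M *v v) = c * Tr2 v" and i: "1 \<le> i" "i - 1 \<le> length w"
  shows "trace_at i (act_at M i g) w = c * trace_at i g w"
proof -
  have diag: "(\<Sum>k\<in>UNIV. M $ (k,k) $ p) = c * (if fst p = snd p then 1 else 0)" for p
  proof -
    have "Tr2 (M *v axis p 1) = c * Tr2 (axis p 1)" using M by blast
    then show ?thesis unfolding Tr2_axis by (simp add: Tr2_def matrix_vector_mult_axis)
  qed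
  define W where "W a b = take (i-1) w @ [a,b] @ drop (i-1) w" for a b
  have len: "length (take (i-1) w) = i - 1" using i by simp
  obtain k where ik: "i = Suc k" using i by (cases i) auto
  have nth_W: "W a b ! (i-1) = a" "W a b ! i = b" for a b
    unfolding W_def using len ik by (simp_all add: nth_append)
  have upd_W: "(W a b)[i-1 := a', i := b'] = W a' b'" for a b a' b'
    unfolding W_def using len ik by (simp add: list_update_append)
  have "trace_at i (act_at M i g) w = (\<Sum>k\<in>UNIV. \<Sum>p\<in>UNIV. M $ (k,k) $ p * g (W (fst p) (snd p)))"
    unfolding trace_at_def act_at_def W_def[symmetric] nth_W upd_W ..
  also have "\<dots> = (\<Sum>p\<in>UNIV. (\<Sum>k\<in>UNIV. M $ (k,k) $ p) * g (W (fst p) (snd p)))"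
    by (simp only: sum_distrib_right) (rule sum.swap)
  also have "\<dots> = (\<Sum>p\<in>UNIV. c * (if fst p = snd p then g (W (fst p) (snd p)) else 0))"
    by (simp add: diag) (rule sum.cong, auto)
  also have "\<dots> = c * (\<Sum>a\<in>UNIV. \<Sum>b\<in>UNIV. (if a = b then g (W a b) else 0))"
    by (simp only: sum_distrib_left[symmetric] sum_UNIV_prod fst_conv snd_conv)
  also have "\<dots> = c * trace_at i g w"
    by (simp add: trace_at_def W_def)
  finally show ?thesis .
qed

lemma trace_at_sum: "trace_at i (\<lambda>u. \<Sum>j\<in>J. g j u) w = (\<Sum>j\<in>J. trace_at i (g j) w)"
  unfolding trace_at_def by (rule sum.swap)

definition swap_index :: "nat \<Rightarrow> nat \<Rightarrow> nat" where
  "swap_index i j = (if j = i - 1 then i else if j = i then i - 1 else j)"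

lemma swap_index_swap_index: "1 \<le> i \<Longrightarrow> swap_index i (swap_index i j) = j"
  by (auto simp: swap_index_def)

lemma swap_index_less: "1 \<le> i \<Longrightarrow> i < n \<Longrightarrow> j < n \<Longrightarrow> swap_index i j < n"
  by (auto simp: swap_index_def)

lemma length_swap_at [simp]: "length (swap_at i xs) = length xs"
  by (simp add: swap_at_def)

lemma nth_swap_at:
  "1 \<le> i \<Longrightarrow> i < length xs \<Longrightarrow> j < length xs \<Longrightarrow> swap_at i xs ! j = xs ! swap_index i j"
  by (auto simp: swap_at_def swap_index_def nth_list_update)

lemma swap_at_swap_at: "1 \<le> i \<Longrightarrow> i < length xs \<Longrightarrow> swap_at i (swap_at i xs) = xs"
  by (rule nth_equalityI) (auto simp: nth_swap_at swap_index_def)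

lemma map_swap_at: "i < length xs \<Longrightarrow> map f (swap_at i xs) = swap_at i (map f xs)"
  by (auto simp: swap_at_def map_update)

lemma del2_at_swap_at: "1 \<le> i \<Longrightarrow> i < length xs \<Longrightarrow> del2_at i (swap_at i xs) = del2_at i xs"
  by (simp add: del2_at_def swap_at_def)

lemma length_del2_at: "1 \<le> i \<Longrightarrow> i < length xs \<Longrightarrow> length (del2_at i xs) = length xs - 2"
  by (simp add: del2_at_def)

lemma prod_swap_index:
  assumes "1 \<le> i" "i < n"
  shows "(\<Prod>k<n. G k (swap_index i k)) = (\<Prod>k<n. (G (swap_index i k) k :: 'a::comm_monoid_mult))"
  by (rule prod.reindex_bij_witness[of "{..<n}" "swap_index i" "swap_index i"])
    (use assms in \<open>auto simp: swap_index_swap_index swap_index_less\<close>)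

section \<open>Continuity of the inverse matrix\<close>

lemma invertible_matrix_inv: "invertible A \<Longrightarrow> A ** matrix_inv A = mat 1 \<and> matrix_inv A ** A = mat 1"
  unfolding invertible_def matrix_inv_def by (rule someI_ex)

lemma matrix_inv_nth_cramer:
  fixes A :: "'a::field^'n::finite^'n"
  assumes "det A \<noteq> 0"
  shows "matrix_inv A $ k $ j = det (\<chi> i l. if l = k then axis j 1 $ i else A $ i $ l) / det A"
proof -
  define x where "x = matrix_inv A *v axis j (1::'a)"
  have "invertible A"
    using assms invertible_det_nz by blast
  then have "A *v x = axis j 1"
    unfolding x_def matrix_vector_mul_assoc by (simp add: invertible_matrix_inv)
  then have "x = (\<chi> k. det (\<chi> i l. if l = k then axis j 1 $ i else A $ i $ l) / det A)"
    using cramer[OF assms] by blast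
  moreover have "x $ k = matrix_inv A $ k $ j"
    unfolding x_def by (rule matrix_vector_mult_axis)
  ultimately show ?thesis by simp
qed

lemma continuous_on_det:
  fixes F :: "'b::topological_space \<Rightarrow> 'a::real_normed_field^'n::finite^'n"
  assumes "\<And>a b. continuous_on S (\<lambda>x. F x $ a $ b)"
  shows "continuous_on S (\<lambda>x. det (F x))"
  unfolding det_def using assms
  by (intro continuous_on_sum continuous_on_mult continuous_on_const continuous_on_prod) auto

lemma continuous_on_matrix_inv:
  fixes F :: "'b::topological_space \<Rightarrow> 'a::real_normed_field^'n::finite^'n"
  assumes cont: "\<And>a b. continuous_on S (\<lambda>x. F x $ a $ b)" and inv: "\<And>x. x \<in> S \<Longrightarrow> invertible (F x)"
  shows "continuous_on S (\<lambda>x. matrix_inv (F x) $ k $ j)"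
proof -
  have det: "det (F x) \<noteq> 0" if "x \<in> S" for x
    using inv[OF that] invertible_det_nz by blast
  have "continuous_on S (\<lambda>x. (\<chi> i l. if l = k then axis j 1 $ i else F x $ i $ l) $ a $ b)" for a b
    by (cases "b = k") (simp_all add: cont)
  then have "continuous_on S (\<lambda>x. det (\<chi> i l. if l = k then axis j 1 $ i else F x $ i $ l) / det (F x))"
    using det by (intro continuous_on_divide continuous_on_det) (auto simp: cont)
  then show ?thesis
    by (rule continuous_on_cong[THEN iffD1, rotated 2]) (auto simp: matrix_inv_nth_cramer det)
qed

lemma continuous_on_matrix_inv_Qtilde:
  assumes "Q_admissible Q" "\<forall>y1 y2. invertible (Qtilde (Q y1 y2))"
  shows "continuous_on UNIV (\<lambda>p. matrix_inv (Qtilde (Q (fst p) (snd p))) $ k $ j)"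
proof (rule continuous_on_matrix_inv)
  have "continuous_on UNIV (\<lambda>p. Q (fst p) (snd p))"
    using assms(1) by (simp add: Q_admissible_def)
  then show "continuous_on UNIV (\<lambda>p. Qtilde (Q (fst p) (snd p)) $ a $ b)" for a b
    unfolding Qtilde_def by (simp add: continuous_on_component)
qed (use assms(2) in auto)

section \<open>Continuous kernels with compact support\<close>

definition list_nhds :: "nat \<Rightarrow> real list \<Rightarrow> real list filter" where
  "list_nhds n ys = (INF d\<in>{0<..}. principal {ys'. length ys' = n \<and> (\<forall>j<n. \<bar>ys'!j - ys!j\<bar> < d)})"

lemma eventually_list_nhds:
  "eventually P (list_nhds n ys) \<longleftrightarrow>
     (\<exists>d>0. \<forall>ys'. length ys' = n \<and> (\<forall>j<n. \<bar>ys'!j - ys!j\<bar> < d) \<longrightarrow> P ys')"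
  unfolding list_nhds_def
proof (subst eventually_INF_base)
  show "\<exists>x\<in>{0<..}. principal {ys'. length ys' = n \<and> (\<forall>j<n. \<bar>ys'!j - ys!j\<bar> < x)}
      \<le> inf (principal {ys'. length ys' = n \<and> (\<forall>j<n. \<bar>ys'!j - ys!j\<bar> < a)})
        (principal {ys'. length ys' = n \<and> (\<forall>j<n. \<bar>ys'!j - ys!j\<bar> < b)})"
    if "a \<in> {0<..}" "b \<in> {0<..}" for a b :: real
    using that by (intro bexI[of _ "min a b"]) (auto simp: inf_principal)
qed (auto simp: eventually_principal)

lemma eventually_list_nhds_length: "eventually (\<lambda>ys'. length ys' = n) (list_nhds n ys)"
  unfolding eventually_list_nhds by (intro exI[of _ 1]) auto

lemma tendsto_nth_list_nhds: "j < n \<Longrightarrow> ((\<lambda>ys'. ys'!j) \<longlongrightarrow> ys!j) (list_nhds n ys)"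
  unfolding tendsto_iff dist_real_def eventually_list_nhds by auto

lemma filterlim_swap_at_list_nhds:
  assumes "1 \<le> i" "i < n" "length ys = n"
  shows "filterlim (swap_at i) (list_nhds n (swap_at i ys)) (list_nhds n ys)"
  unfolding filterlim_iff eventually_list_nhds
proof (intro allI impI)
  fix P assume "\<exists>d>0. \<forall>ys'. length ys' = n \<and> (\<forall>j<n. \<bar>ys'!j - swap_at i ys!j\<bar> < d) \<longrightarrow> P ys'"
  then obtain d where d: "d > 0" "\<And>ys'. length ys' = n \<Longrightarrow> \<forall>j<n. \<bar>ys'!j - swap_at i ys!j\<bar> < d \<Longrightarrow> P ys'"
    by blast
  have "P (swap_at i ys')" if "length ys' = n" "\<forall>j<n. \<bar>ys' ! j - ys ! j\<bar> < d" for ys'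
    using that assms by (intro d(2)) (auto simp: nth_swap_at swap_index_less)
  with d(1) show "\<exists>d>0. \<forall>ys'. length ys' = n \<and> (\<forall>j<n. \<bar>ys' ! j - ys ! j\<bar> < d) \<longrightarrow> P (swap_at i ys')"
    by blast
qed

lemma C0_eq_0: "C0 n \<phi> \<Longrightarrow> length ys \<noteq> n \<or> length w \<noteq> n \<Longrightarrow> \<phi> ys w = 0"
  unfolding C0_def by blast

lemma C0_tendsto:
  assumes "C0 n \<phi>" "length ys = n"
  shows "((\<lambda>ys'. \<phi> ys' w) \<longlongrightarrow> \<phi> ys w) (list_nhds n ys)"
  unfolding tendsto_iff dist_norm eventually_list_nhds
proof (intro allI impI)
  fix e :: real
  assume "e > 0"
  then obtain d where "d > 0"
    "\<forall>ys'. length ys' = n \<and> (\<forall>j<n. \<bar>ys' ! j - ys ! j\<bar> < d) \<longrightarrow> (\<forall>w. cmod (\<phi> ys' w - \<phi> ys w) < e)"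
    using assms unfolding C0_def by blast
  then show "\<exists>d>0. \<forall>ys'. length ys' = n \<and> (\<forall>j<n. \<bar>ys' ! j - ys ! j\<bar> < d) \<longrightarrow> cmod (\<phi> ys' w - \<phi> ys w) < e"
    by blast
qed

text \<open>Pointwise convergence suffices, since there are only finitely many index words of
  length n.\<close>
lemma C0I:
  fixes \<phi> :: "real list \<Rightarrow> ('r::finite) tens"
  assumes vanish: "\<And>ys w. length ys \<noteq> n \<or> length w \<noteq> n \<Longrightarrow> \<phi> ys w = 0"
    and cont: "\<And>ys w. length ys = n \<Longrightarrow> length w = n \<Longrightarrow> ((\<lambda>ys'. \<phi> ys' w) \<longlongrightarrow> \<phi> ys w) (list_nhds n ys)"
    and support: "\<exists>R. \<forall>ys. length ys = n \<and> (\<exists>j<n. \<bar>ys ! j\<bar> > R) \<longrightarrow> (\<forall>w. \<phi> ys w = 0)"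
  shows "C0 n \<phi>"
  unfolding C0_def
proof (intro conjI allI impI)
  fix ys :: "real list" and e :: real
  assume ys: "length ys = n" and e: "e > 0"
  have "finite {w :: 'r list. length w = n}"
    using finite_lists_length_eq[of "UNIV :: 'r set" n] by simp
  then have "eventually (\<lambda>ys'. \<forall>w\<in>{w. length w = n}. dist (\<phi> ys' w) (\<phi> ys w) < e) (list_nhds n ys)"
    using cont[OF ys] e by (intro eventually_ball_finite) (auto simp: tendsto_iff)
  then have "eventually (\<lambda>ys'. \<forall>w. cmod (\<phi> ys' w - \<phi> ys w) < e) (list_nhds n ys)"
  proof eventually_elim
    case (elim ys')
    show ?case
    proof
      fix w
      show "cmod (\<phi> ys' w - \<phi> ys w) < e"
        using elim vanish[of ys' w] vanish[of ys w] ys e by (cases "length w = n") (auto simp: dist_norm)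
    qed
  qed
  then show "\<exists>d>0. \<forall>ys'. length ys' = n \<and> (\<forall>j<n. \<bar>ys' ! j - ys ! j\<bar> < d) \<longrightarrow> (\<forall>w. cmod (\<phi> ys' w - \<phi> ys w) < e)"
    unfolding eventually_list_nhds .
qed (use vanish support in blast)+

lemma C0_act_at_swap_at:
  fixes \<phi> :: "real list \<Rightarrow> ('r::finite) tens" and M :: "real \<Rightarrow> real \<Rightarrow> 'r op2"
  assumes C: "C0 n \<phi>" and i: "1 \<le> i" "i < n"
    and M: "\<And>a b. continuous_on UNIV (\<lambda>p. M (fst p) (snd p) $ a $ b)"
  shows "C0 n (\<lambda>ys w. if length ys = n \<and> length w = n
                     then act_at (M (ys!(i-1)) (ys!i)) i (\<phi> (swap_at i ys)) w else 0)"
    (is "C0 n ?\<psi>")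
proof (rule C0I)
  fix ys :: "real list" and w :: "'r list"
  assume ys: "length ys = n" and w: "length w = n"
  define E where "E ys' = (\<Sum>p\<in>UNIV. M (ys'!(i-1)) (ys'!i) $ (w!(i-1), w!i) $ p
                             * \<phi> (swap_at i ys') (w[i-1 := fst p, i := snd p]))" for ys'
  have ev: "eventually (\<lambda>ys'. E ys' = ?\<psi> ys' w) (list_nhds n ys)"
    using eventually_list_nhds_length[of n ys]
    by eventually_elim (use w in \<open>simp add: E_def act_at_def\<close>)
  have tendsto_M: "((\<lambda>ys'. M (ys'!(i-1)) (ys'!i) $ a $ b) \<longlongrightarrow> M (ys!(i-1)) (ys!i) $ a $ b) (list_nhds n ys)"
    for a b
  proof -
    have "isCont (\<lambda>p. M (fst p) (snd p) $ a $ b) (ys!(i-1), ys!i)"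
      using M continuous_on_eq_continuous_at[OF open_UNIV] by blast
    moreover have "((\<lambda>ys'. (ys'!(i-1), ys'!i)) \<longlongrightarrow> (ys!(i-1), ys!i)) (list_nhds n ys)"
      using i by (intro tendsto_Pair tendsto_nth_list_nhds) auto
    ultimately show ?thesis
      using isCont_tendsto_compose by fastforce
  qed
  have tendsto_\<phi>: "((\<lambda>ys'. \<phi> (swap_at i ys') u) \<longlongrightarrow> \<phi> (swap_at i ys) u) (list_nhds n ys)" for u
    using filterlim_compose[OF C0_tendsto[OF C, of "swap_at i ys" u] filterlim_swap_at_list_nhds[OF i ys]] ys
    by simp
  have "(E \<longlongrightarrow> E ys) (list_nhds n ys)"
    unfolding E_def by (intro tendsto_sum tendsto_mult tendsto_M tendsto_\<phi>)
  moreover have "?\<psi> ys w = E ys"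
    using ys w by (simp add: E_def act_at_def)
  ultimately show "((\<lambda>ys'. ?\<psi> ys' w) \<longlongrightarrow> ?\<psi> ys w) (list_nhds n ys)"
    using ev by (simp add: Lim_transform_eventually)
next
  obtain R where R: "\<forall>ys. length ys = n \<and> (\<exists>j<n. \<bar>ys ! j\<bar> > R) \<longrightarrow> (\<forall>w. \<phi> ys w = 0)"
    using C unfolding C0_def by blast
  have "?\<psi> ys w = 0" if ys: "length ys = n" and j: "j < n" "\<bar>ys ! j\<bar> > R" for ys w j
  proof -
    have "swap_at i ys ! swap_index i j = ys ! j"
      using ys j i by (simp add: nth_swap_at swap_index_less swap_index_swap_index)
    then have "\<phi> (swap_at i ys) u = 0" for u
      using R ys j swap_index_less[OF i j(1)] by (metis length_swap_at)
    then show ?thesis by (simp add: act_at_def)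
  qed
  then show "\<exists>R. \<forall>ys. length ys = n \<and> (\<exists>j<n. \<bar>ys ! j\<bar> > R) \<longrightarrow> (\<forall>w. ?\<psi> ys w = 0)"
    by blast
qed auto

lemma act_at_genker_swap_at:
  fixes \<phi> :: "real list \<Rightarrow> ('r::finite) tens" and M :: "real \<Rightarrow> real \<Rightarrow> 'r op2"
    and xs :: "(real \<times> (real^'z::finite)) list"
  assumes C: "C0 n \<phi>" and i: "1 \<le> i" "i < n"
  shows "act_at (M (fst (xs!(i-1))) (fst (xs!i))) i (genker n \<phi> gs (swap_at i xs)) w
   = genker n (\<lambda>ys w. if length ys = n \<and> length w = n
                      then act_at (M (ys!(i-1)) (ys!i)) i (\<phi> (swap_at i ys)) w else 0)
       (\<lambda>k. gs (swap_index i k)) xs w"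
proof (cases "length xs = n")
  case xs: True
  define P where "P = (\<Prod>k<n. gs (swap_index i k) (snd (xs!k)))"
  have "(\<Prod>k<n. gs k (snd (swap_at i xs ! k))) = (\<Prod>k<n. gs k (snd (xs ! swap_index i k)))"
    by (rule prod.cong) (use xs i in \<open>auto simp: nth_swap_at\<close>)
  also have "\<dots> = P"
    unfolding P_def by (rule prod_swap_index[OF i, of "\<lambda>k l. gs k (snd (xs ! l))"])
  finally have "genker n \<phi> gs (swap_at i xs) = (\<lambda>u. \<phi> (swap_at i (map fst xs)) u * P)"
    using xs C0_eq_0[OF C] i by (auto simp: genker_def map_swap_at)
  moreover have "act_at (M (fst (xs!(i-1))) (fst (xs!i))) i (\<phi> (swap_at i (map fst xs))) w = 0"
    if "length w \<noteq> n"
    by (rule act_at_eq_0) (use that C0_eq_0[OF C] in auto)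
  ultimately show ?thesis
    using xs i by (cases "length w = n") (simp_all add: act_at_mult_right genker_def P_def)
next
  case False
  then have "act_at (M (fst (xs!(i-1))) (fst (xs!i))) i (genker n \<phi> gs (swap_at i xs)) w = 0"
    by (intro act_at_eq_0) (auto simp: genker_def)
  then show ?thesis using False by (simp add: genker_def)
qed

lemma Fn_eq_0: "f \<in> Fn n \<Longrightarrow> length xs \<noteq> n \<or> length w \<noteq> n \<Longrightarrow> f xs w = 0"
  by (auto simp: Fn_def genker_def)

lemma Fn_kop_kswap:
  fixes M :: "real \<Rightarrow> real \<Rightarrow> ('r::finite) op2" and f :: "('z::finite,'r) kernel"
  assumes M: "\<And>a b. continuous_on UNIV (\<lambda>p. M (fst p) (snd p) $ a $ b)" and f: "f \<in> Fn n"
    and i: "1 \<le> i" "i < n"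
  shows "kop (\<lambda>x1 x2. M (fst x1) (fst x2)) i (kswap i f) \<in> Fn n"
proof -
  obtain m :: nat and \<phi>s :: "nat \<Rightarrow> real list \<Rightarrow> 'r tens" and gss :: "nat \<Rightarrow> nat \<Rightarrow> real^'z \<Rightarrow> complex"
    where gen: "\<forall>j<m. C0 n (\<phi>s j) \<and> (\<forall>k<n. L2Z (gss j k))"
      and f_eq: "f = (\<lambda>xs w. \<Sum>j<m. genker n (\<phi>s j) (gss j) xs w)"
    using f unfolding Fn_def by blast
  define \<phi>s' where "\<phi>s' j = (\<lambda>ys w. if length ys = n \<and> length w = n
      then act_at (M (ys!(i-1)) (ys!i)) i (\<phi>s j (swap_at i ys)) w else 0)" for j
  define gss' where "gss' j = (\<lambda>k. gss j (swap_index i k))" for j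
  have "\<forall>j<m. C0 n (\<phi>s' j) \<and> (\<forall>k<n. L2Z (gss' j k))"
    using gen C0_act_at_swap_at[OF _ i M] swap_index_less[OF i] unfolding \<phi>s'_def gss'_def by blast
  moreover have "kop (\<lambda>x1 x2. M (fst x1) (fst x2)) i (kswap i f)
      = (\<lambda>xs w. \<Sum>j<m. genker n (\<phi>s' j) (gss' j) xs w)"
  proof (intro ext)
    fix xs :: "(real \<times> (real^'z)) list" and w
    have "kop (\<lambda>x1 x2. M (fst x1) (fst x2)) i (kswap i f) xs w
        = (\<Sum>j<m. act_at (M (fst (xs!(i-1))) (fst (xs!i))) i (genker n (\<phi>s j) (gss j) (swap_at i xs)) w)"
      unfolding kop_def kswap_def f_eq by (rule act_at_sum)
    also have "\<dots> = (\<Sum>j<m. genker n (\<phi>s' j) (gss' j) xs w)"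
      by (rule sum.cong) (use gen i in \<open>auto simp only: \<phi>s'_def gss'_def intro!: act_at_genker_swap_at\<close>)
    finally show "kop (\<lambda>x1 x2. M (fst x1) (fst x2)) i (kswap i f) xs w
        = (\<Sum>j<m. genker n (\<phi>s' j) (gss' j) xs w)" .
  qed
  ultimately show ?thesis unfolding Fn_def by blast
qed

section \<open>Integration over the diagonal\<close>

definition ins_pair :: "nat \<Rightarrow> 'b list \<Rightarrow> 'b \<Rightarrow> 'b list" where
  "ins_pair a xs x = take a xs @ [x, x] @ drop a xs"

definition skip_pair :: "nat \<Rightarrow> nat \<Rightarrow> nat" where
  "skip_pair a j = (if j < a then j else j + 2)"

lemma length_ins_pair [simp]: "length (ins_pair a xs x) = length xs + 2"
  by (simp add: ins_pair_def)

lemma nth_ins_pair: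
  "a \<le> length ys \<Longrightarrow> j < length ys + 2 \<Longrightarrow>
   ins_pair a ys y ! j = (if j < a then ys ! j else if j < a + 2 then y else ys ! (j - 2))"
  by (auto simp: ins_pair_def nth_append min_def nth_Cons')

lemma nth_ins_pair_skip_pair: "a \<le> length ys \<Longrightarrow> j < length ys \<Longrightarrow> ins_pair a ys y ! skip_pair a j = ys ! j"
  by (simp add: nth_ins_pair skip_pair_def)

lemma map_ins_pair: "map f (ins_pair a xs x) = ins_pair a (map f xs) (f x)"
  by (simp add: ins_pair_def take_map drop_map)

lemma trace_at_ins_pair: "trace_at i v w = (\<Sum>k\<in>UNIV. v (ins_pair (i-1) w k))"
  by (simp add: trace_at_def ins_pair_def)

lemma gker_ins_pair: "gker i f xs w = integral\<^sup>L lborel (\<lambda>x. trace_at i (f (ins_pair (i-1) xs x)) w)"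
  by (simp add: gker_def ins_pair_def)

lemma ins_pair_close:
  assumes "length ys = m" "length ys' = m" "a \<le> m" "\<forall>j<m. \<bar>ys'!j - ys!j\<bar> < d" "\<bar>y' - y\<bar> < d"
  shows "\<forall>j<m+2. \<bar>ins_pair a ys' y' ! j - ins_pair a ys y ! j\<bar> < d"
  using assms by (auto simp: nth_ins_pair)

lemma prod_ins_pair:
  fixes G :: "nat \<Rightarrow> 'b \<Rightarrow> 'c::comm_monoid_mult"
  assumes "length xs = m" "a \<le> m"
  shows "(\<Prod>j<m+2. G j (ins_pair a xs x ! j)) = (\<Prod>j<m. G (skip_pair a j) (xs ! j)) * G a x * G (a+1) x"
proof -
  have inj: "inj_on (skip_pair a) {..<m}"
    unfolding skip_pair_def inj_on_def by auto
  have "{..<m+2} = insert a (insert (a+1) (skip_pair a ` {..<m}))"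
  proof (intro set_eqI iffI)
    fix x assume x: "x \<in> {..<m+2}"
    show "x \<in> insert a (insert (a+1) (skip_pair a ` {..<m}))"
    proof (cases "x < a")
      case True then show ?thesis using assms by (auto simp: skip_pair_def image_iff intro!: bexI[of _ x])
    next
      case False then show ?thesis using x
        by (cases "x = a \<or> x = a + 1") (auto simp: skip_pair_def image_iff intro!: bexI[of _ "x - 2"])
    qed
  qed (use assms in \<open>auto simp: skip_pair_def\<close>)
  moreover have "a \<notin> insert (a+1) (skip_pair a ` {..<m})" "a + 1 \<notin> skip_pair a ` {..<m}"
    by (auto simp: skip_pair_def)
  ultimately have "(\<Prod>j<m+2. G j (ins_pair a xs x ! j)) = G a (ins_pair a xs x ! a) *
      (G (a+1) (ins_pair a xs x ! (a+1)) * (\<Prod>j\<in>skip_pair a ` {..<m}. G j (ins_pair a xs x ! j)))"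
    by (simp add: prod.insert)
  also have "(\<Prod>j\<in>skip_pair a ` {..<m}. G j (ins_pair a xs x ! j)) = (\<Prod>j<m. G (skip_pair a j) (xs ! j))"
    using assms by (simp add: prod.reindex[OF inj] nth_ins_pair_skip_pair)
  finally show ?thesis
    using assms by (simp add: nth_ins_pair mult_ac)
qed

lemma
  fixes F :: "real \<Rightarrow> complex" and G :: "real^'z::finite \<Rightarrow> complex"
  assumes F: "integrable lborel F" and G: "integrable lborel G"
  shows integrable_lborel_prod_mult:
      "integrable (lborel :: (real \<times> (real^'z)) measure) (\<lambda>x. F (fst x) * G (snd x))"
    and integral_lborel_prod_mult:
      "integral\<^sup>L (lborel :: (real \<times> (real^'z)) measure) (\<lambda>x. F (fst x) * G (snd x))
         = integral\<^sup>L lborel F * integral\<^sup>L lborel G"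
proof -
  have pair: "pair_sigma_finite (lborel :: real measure) (lborel :: (real^'z) measure)"
    by (simp add: pair_sigma_finite_def sigma_finite_lborel)
  have [measurable]: "F \<in> borel_measurable lborel" "G \<in> borel_measurable lborel"
    using F G by auto
  have int: "integrable (lborel \<Otimes>\<^sub>M lborel) (\<lambda>x. F (fst x) * G (snd x))"
  proof (rule pair_sigma_finite.Fubini_integrable[OF pair])
    show "integrable lborel (\<lambda>x. \<integral>y. norm (F (fst (x, y)) * G (snd (x, y))) \<partial>lborel)"
      using F G by (simp add: norm_mult)
    show "AE x in lborel. integrable lborel (\<lambda>y. F (fst (x, y)) * G (snd (x, y)))"
      using G by simp
  qed measurable
  then show "integrable (lborel :: (real \<times> (real^'z)) measure) (\<lambda>x. F (fst x) * G (snd x))"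
    by (simp add: lborel_prod)
  have "integral\<^sup>L (lborel \<Otimes>\<^sub>M lborel) (\<lambda>x. F (fst x) * G (snd x)) = (\<integral>x. (\<integral>y. F x * G y \<partial>lborel) \<partial>lborel)"
    using pair_sigma_finite.integral_fst'[OF pair int] by simp
  then show "integral\<^sup>L (lborel :: (real \<times> (real^'z)) measure) (\<lambda>x. F (fst x) * G (snd x))
      = integral\<^sup>L lborel F * integral\<^sup>L lborel G"
    by (simp add: lborel_prod)
qed

lemma integrable_mult_L2Z:
  assumes "L2Z g" "L2Z h"
  shows "integrable lborel (\<lambda>z. g z * h z)"
proof (rule Bochner_Integration.integrable_bound)
  have [measurable]: "g \<in> borel_measurable lborel" "h \<in> borel_measurable lborel"
    using assms by (auto simp: L2Z_def)
  show "integrable lborel (\<lambda>z. (cmod (g z))\<^sup>2 + (cmod (h z))\<^sup>2)"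
    using assms by (auto simp: L2Z_def)
  show "(\<lambda>z. g z * h z) \<in> borel_measurable lborel"
    by measurable
  have "a * b \<le> a\<^sup>2 + b\<^sup>2" if "0 \<le> a" "0 \<le> b" for a b :: real
    using sum_squares_bound[of a b] mult_nonneg_nonneg[OF that] by linarith
  then show "AE z in lborel. norm (g z * h z) \<le> norm ((cmod (g z))\<^sup>2 + (cmod (h z))\<^sup>2)"
    by (auto simp: norm_mult)
qed

lemma Icc_uniform_radius:
  fixes r :: "real \<Rightarrow> real"
  assumes r: "\<And>c. r c > 0"
  obtains d where "d > 0" "\<And>y. y \<in> {a..b} \<Longrightarrow> \<exists>c. \<bar>y - c\<bar> < r c \<and> d \<le> r c"
proof -
  obtain T where T: "finite T" "{a..b} \<subseteq> (\<Union>c\<in>T. ball c (r c))"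
  proof (rule compactE_image[of "{a..b}" "{a..b}" "\<lambda>c. ball c (r c)"])
    show "{a..b} \<subseteq> (\<Union>c\<in>{a..b}. ball c (r c))"
      using r by (auto intro!: bexI)
  qed auto
  define d where "d = Min (insert 1 (r ` T))"
  have "d > 0"
    unfolding d_def using T(1) r by (simp add: Min_gr_iff)
  moreover have "\<exists>c. \<bar>y - c\<bar> < r c \<and> d \<le> r c" if y: "y \<in> {a..b}" for y
  proof -
    obtain c where "c \<in> T" "dist c y < r c"
      using T(2) y by auto
    moreover from \<open>c \<in> T\<close> have "d \<le> r c"
      unfolding d_def using T(1) by (intro Min_le) auto
    ultimately show ?thesis
      by (auto simp: dist_real_def abs_minus_commute)
  qed
  ultimately show ?thesis
    using that by blast
qed

locale C0_slice =
  fixes \<phi> :: "real list \<Rightarrow> ('r::finite) tens" and m a :: nat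
  assumes C0: "C0 (m + 2) \<phi>" and a_le: "a \<le> m"
begin

lemma slice_support:
  obtains R where "R \<ge> 0" "\<And>ys y u. length ys = m \<Longrightarrow> \<bar>y\<bar> > R \<Longrightarrow> \<phi> (ins_pair a ys y) u = 0"
proof -
  obtain R where R: "\<forall>ys. length ys = m + 2 \<and> (\<exists>j<m + 2. \<bar>ys ! j\<bar> > R) \<longrightarrow> (\<forall>w. \<phi> ys w = 0)"
    using C0 unfolding C0_def by blast
  show ?thesis
  proof (rule that[of "\<bar>R\<bar>"])
    fix ys :: "real list" and y u
    assume ys: "length ys = m" and y: "\<bar>y\<bar> > \<bar>R\<bar>"
    have "ins_pair a ys y ! a = y" "a < m + 2"
      using ys a_le by (simp_all add: nth_ins_pair)
    then have "\<exists>j<m + 2. \<bar>ins_pair a ys y ! j\<bar> > R"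
      using y by (intro exI[of _ a]) auto
    then show "\<phi> (ins_pair a ys y) u = 0"
      by (intro R[rule_format]) (simp add: ys)
  qed simp
qed

lemma C0_continuous:
  "length zs = m + 2 \<Longrightarrow> e > 0 \<Longrightarrow> \<exists>d>0. \<forall>zs'. length zs' = m + 2 \<and> (\<forall>j<m + 2. \<bar>zs'!j - zs!j\<bar> < d)
      \<longrightarrow> (\<forall>w. cmod (\<phi> zs' w - \<phi> zs w) < e)"
  using C0 unfolding C0_def by blast

lemma continuous_on_slice: "length ys = m \<Longrightarrow> continuous_on UNIV (\<lambda>y. \<phi> (ins_pair a ys y) u)"
  unfolding continuous_on_iff
proof (intro ballI allI impI)
  fix x e :: real
  assume ys: "length ys = m" and e: "e > 0"
  obtain d where d: "d > 0" "\<forall>zs'. length zs' = m + 2 \<and> (\<forall>j<m + 2. \<bar>zs'!j - ins_pair a ys x!j\<bar> < d)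
      \<longrightarrow> (\<forall>w. cmod (\<phi> zs' w - \<phi> (ins_pair a ys x) w) < e)"
    using C0_continuous[of "ins_pair a ys x" e] ys e by auto
  have "dist (\<phi> (ins_pair a ys x') u) (\<phi> (ins_pair a ys x) u) < e" if "dist x' x < d" for x'
  proof -
    have "\<forall>j<m + 2. \<bar>ins_pair a ys x' ! j - ins_pair a ys x ! j\<bar> < d"
      using ins_pair_close[OF ys ys a_le, of d x' x] that d(1) by (simp add: dist_real_def)
    then show ?thesis
      using d(2) ys by (simp add: dist_norm)
  qed
  with d(1) show "\<exists>d>0. \<forall>x'\<in>UNIV. dist x' x < d \<longrightarrow> dist (\<phi> (ins_pair a ys x') u) (\<phi> (ins_pair a ys x) u) < e"
    by blast
qed

lemma integrable_slice: "length ys = m \<Longrightarrow> integrable lborel (\<lambda>y. \<phi> (ins_pair a ys y) u)"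
proof -
  assume ys: "length ys = m"
  obtain R where "R \<ge> 0" and R: "\<And>ys y u. length ys = m \<Longrightarrow> \<bar>y\<bar> > R \<Longrightarrow> \<phi> (ins_pair a ys y) u = 0"
    using slice_support by blast
  have "integrable lborel (\<lambda>y. indicator {-R..R} y *\<^sub>R \<phi> (ins_pair a ys y) u)"
    by (rule borel_integrable_compact) (auto intro: continuous_on_subset[OF continuous_on_slice[OF ys]])
  moreover have "indicator {-R..R} y *\<^sub>R \<phi> (ins_pair a ys y) u = \<phi> (ins_pair a ys y) u" for y
    using R[OF ys, of y u] by (cases "\<bar>y\<bar> \<le> R") (auto simp: indicator_def abs_le_iff)
  ultimately show ?thesis by simp
qed

text \<open>Uniformity in y comes from covering the support [-R, R] by finitely many balls on
  which phi varies by less than e/2.\<close>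
lemma slice_uniformly_close:
  assumes ys: "length ys = m" and e: "e > 0"
  shows "\<exists>d>0. \<forall>ys'. length ys' = m \<and> (\<forall>j<m. \<bar>ys'!j - ys!j\<bar> < d)
           \<longrightarrow> (\<forall>y. cmod (\<phi> (ins_pair a ys' y) u - \<phi> (ins_pair a ys y) u) < e)"
proof -
  obtain R where R: "R \<ge> 0" "\<And>ys y u. length ys = m \<Longrightarrow> \<bar>y\<bar> > R \<Longrightarrow> \<phi> (ins_pair a ys y) u = 0"
    using slice_support by blast
  have "\<forall>c. \<exists>r>0. \<forall>zs'. length zs' = m + 2 \<and> (\<forall>j<m + 2. \<bar>zs'!j - ins_pair a ys c!j\<bar> < r)
          \<longrightarrow> (\<forall>w. cmod (\<phi> zs' w - \<phi> (ins_pair a ys c) w) < e/2)"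
    using ys e by (intro allI C0_continuous) auto
  then obtain r where r: "\<And>c. r c > 0"
    "\<And>c zs'. length zs' = m + 2 \<Longrightarrow> (\<forall>j<m + 2. \<bar>zs'!j - ins_pair a ys c!j\<bar> < r c)
          \<Longrightarrow> cmod (\<phi> zs' u - \<phi> (ins_pair a ys c) u) < e/2"
    by metis
  obtain d where d: "d > 0" and cover: "\<And>y. y \<in> {-R..R} \<Longrightarrow> \<exists>c. \<bar>y - c\<bar> < r c / 2 \<and> d \<le> r c / 2"
    using Icc_uniform_radius[of "\<lambda>c. r c / 2"] r(1) half_gt_zero by blast
  have "cmod (\<phi> (ins_pair a ys' y) u - \<phi> (ins_pair a ys y) u) < e"
    if ys': "length ys' = m" "\<forall>j<m. \<bar>ys'!j - ys!j\<bar> < d" for ys' y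
  proof (cases "\<bar>y\<bar> > R")
    case True
    then show ?thesis using R(2) ys ys' e by simp
  next
    case False
    then have "y \<in> {-R..R}" by auto
    then obtain c where c: "\<bar>y - c\<bar> < r c / 2" "d \<le> r c / 2"
      using cover by blast
    have "\<bar>ys'!j - ys!j\<bar> < r c" if "j < m" for j
      using ys'(2) that c(2) r(1)[of c] by force
    then have "\<forall>j<m + 2. \<bar>ins_pair a ys' y ! j - ins_pair a ys c ! j\<bar> < r c"
      using c r(1)[of c] by (intro ins_pair_close[OF ys ys'(1) a_le]) auto
    then have "cmod (\<phi> (ins_pair a ys' y) u - \<phi> (ins_pair a ys c) u) < e/2"
      using r(2) ys' by simp
    moreover have "\<forall>j<m + 2. \<bar>ins_pair a ys y ! j - ins_pair a ys c ! j\<bar> < r c"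
      using c r(1)[of c] by (intro ins_pair_close[OF ys ys a_le]) auto
    then have "cmod (\<phi> (ins_pair a ys y) u - \<phi> (ins_pair a ys c) u) < e/2"
      using r(2) ys by simp
    ultimately show ?thesis
      using norm_triangle_ineq4[of "\<phi> (ins_pair a ys' y) u - \<phi> (ins_pair a ys c) u"
          "\<phi> (ins_pair a ys y) u - \<phi> (ins_pair a ys c) u"] by simp
  qed
  with d show ?thesis by blast
qed

lemma tendsto_integral_slice:
  assumes ys: "length ys = m"
  shows "((\<lambda>ys'. integral\<^sup>L lborel (\<lambda>y. \<phi> (ins_pair a ys' y) u))
           \<longlongrightarrow> integral\<^sup>L lborel (\<lambda>y. \<phi> (ins_pair a ys y) u)) (list_nhds m ys)"
  unfolding tendsto_iff eventually_list_nhds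
proof (intro allI impI)
  fix e :: real
  assume e: "e > 0"
  obtain R where R: "R \<ge> 0" "\<And>ys y u. length ys = m \<Longrightarrow> \<bar>y\<bar> > R \<Longrightarrow> \<phi> (ins_pair a ys y) u = 0"
    using slice_support by blast
  define e' where "e' = e / (2 * R + 1)"
  have e': "e' > 0" "e' * (2 * R) < e"
    using e R(1) by (simp_all add: e'_def field_simps)
  obtain d where d: "d > 0" "\<forall>ys'. length ys' = m \<and> (\<forall>j<m. \<bar>ys'!j - ys!j\<bar> < d)
      \<longrightarrow> (\<forall>y. cmod (\<phi> (ins_pair a ys' y) u - \<phi> (ins_pair a ys y) u) < e')"
    using slice_uniformly_close[OF ys e'(1)] by blast
  have "dist (integral\<^sup>L lborel (\<lambda>y. \<phi> (ins_pair a ys' y) u)) (integral\<^sup>L lborel (\<lambda>y. \<phi> (ins_pair a ys y) u)) < e"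
    if ys': "length ys' = m" "\<forall>j<m. \<bar>ys'!j - ys!j\<bar> < d" for ys'
  proof -
    have bound: "norm (\<phi> (ins_pair a ys' y) u - \<phi> (ins_pair a ys y) u) \<le> e' * indicator {-R..R} y" for y
      using R(2) ys ys' d(2) e'(1) by (cases "\<bar>y\<bar> > R") (auto simp: indicator_def abs_le_iff less_imp_le)
    have "dist (integral\<^sup>L lborel (\<lambda>y. \<phi> (ins_pair a ys' y) u)) (integral\<^sup>L lborel (\<lambda>y. \<phi> (ins_pair a ys y) u))
        = norm (integral\<^sup>L lborel (\<lambda>y. \<phi> (ins_pair a ys' y) u - \<phi> (ins_pair a ys y) u))"
      using integrable_slice ys ys' by (simp add: dist_norm)
    also have "\<dots> \<le> integral\<^sup>L lborel (\<lambda>y. norm (\<phi> (ins_pair a ys' y) u - \<phi> (ins_pair a ys y) u))"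
      by (rule integral_norm_bound)
    also have "\<dots> \<le> integral\<^sup>L lborel (\<lambda>y. e' * indicator {-R..R} y)"
      using integrable_slice ys ys' bound
      by (intro integral_mono) (auto intro!: integrable_mult_right integrable_real_indicator
          simp: emeasure_lborel_Icc_eq)
    also have "\<dots> = e' * (2 * R)"
      using R(1) by simp
    finally show ?thesis
      using e'(2) by simp
  qed
  with d(1) show "\<exists>d>0. \<forall>ys'. length ys' = m \<and> (\<forall>j<m. \<bar>ys' ! j - ys ! j\<bar> < d)
      \<longrightarrow> dist (integral\<^sup>L lborel (\<lambda>y. \<phi> (ins_pair a ys' y) u)) (integral\<^sup>L lborel (\<lambda>y. \<phi> (ins_pair a ys y) u)) < e"
    by blast
qed

end

text \<open>The Y-part of g for a generating kernel; the Z-integral of the two removed L^2 factors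
  enters as the constant c.\<close>
definition trace_integral :: "nat \<Rightarrow> nat \<Rightarrow> complex \<Rightarrow> (real list \<Rightarrow> ('r::finite) tens) \<Rightarrow> real list \<Rightarrow> 'r tens"
  where "trace_integral a m c \<phi> ys w = (if length ys = m \<and> length w = m
      then c * (\<Sum>k\<in>UNIV. integral\<^sup>L lborel (\<lambda>y. \<phi> (ins_pair a ys y) (ins_pair a w k))) else 0)"

lemma C0_trace_integral:
  fixes \<phi> :: "real list \<Rightarrow> ('r::finite) tens"
  assumes C: "C0 (m + 2) \<phi>" and a: "a \<le> m"
  shows "C0 m (trace_integral a m c \<phi>)"
proof (rule C0I)
  interpret C0_slice \<phi> m a
    using assms by unfold_locales
  show "((\<lambda>ys'. trace_integral a m c \<phi> ys' w) \<longlongrightarrow> trace_integral a m c \<phi> ys w) (list_nhds m ys)"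
    if ys: "length ys = m" and w: "length w = m" for ys w
  proof -
    let ?I = "\<lambda>ys'. c * (\<Sum>k\<in>UNIV. integral\<^sup>L lborel (\<lambda>y. \<phi> (ins_pair a ys' y) (ins_pair a w k)))"
    have "eventually (\<lambda>ys'. ?I ys' = trace_integral a m c \<phi> ys' w) (list_nhds m ys)"
      using eventually_list_nhds_length[of m ys] by eventually_elim (use w in \<open>simp add: trace_integral_def\<close>)
    moreover have "(?I \<longlongrightarrow> ?I ys) (list_nhds m ys)"
      by (intro tendsto_mult tendsto_const tendsto_sum tendsto_integral_slice ys)
    ultimately show ?thesis
      using ys w by (simp add: Lim_transform_eventually trace_integral_def)
  qed
  obtain R where R: "\<forall>ys. length ys = m + 2 \<and> (\<exists>j<m + 2. \<bar>ys ! j\<bar> > R) \<longrightarrow> (\<forall>w. \<phi> ys w = 0)"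
    using C unfolding C0_def by blast
  have "trace_integral a m c \<phi> ys w = 0" if ys: "length ys = m" and j: "j < m" "\<bar>ys ! j\<bar> > R" for ys w j
  proof -
    have "skip_pair a j < m + 2" "ins_pair a ys y ! skip_pair a j = ys ! j" for y
      using ys j a by (simp add: skip_pair_def, simp add: nth_ins_pair_skip_pair)
    then have "\<exists>j<m + 2. \<bar>ins_pair a ys y ! j\<bar> > R" for y
      using j by metis
    then have "\<phi> (ins_pair a ys y) u = 0" for y u
      by (intro R[rule_format]) (simp add: ys)
    then show ?thesis by (simp add: trace_integral_def)
  qed
  then show "\<exists>R. \<forall>ys. length ys = m \<and> (\<exists>j<m. \<bar>ys ! j\<bar> > R) \<longrightarrow> (\<forall>w. trace_integral a m c \<phi> ys w = 0)"
    by blast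
qed (auto simp: trace_integral_def)

lemma
  fixes \<phi> :: "real list \<Rightarrow> ('r::finite) tens" and gs :: "nat \<Rightarrow> real^'z::finite \<Rightarrow> complex"
    and xs :: "(real \<times> (real^'z)) list" and w :: "'r list"
  assumes C: "C0 n \<phi>" and L: "\<forall>k<n. L2Z (gs k)" and i: "1 \<le> i" "i < n"
  shows integrable_trace_genker:
      "integrable lborel (\<lambda>x. trace_at i (genker n \<phi> gs (ins_pair (i-1) xs x)) w)"
    and gker_genker: "gker i (genker n \<phi> gs) xs w =
      genker (n-2) (trace_integral (i-1) (n-2) (integral\<^sup>L lborel (\<lambda>z. gs (i-1) z * gs i z)) \<phi>)
        (\<lambda>k. gs (skip_pair (i-1) k)) xs w"
proof -
  define a where "a = i - 1"
  define m where "m = n - 2"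
  have n: "n = m + 2" and a: "a \<le> m" and i_eq: "i = a + 1"
    using i by (auto simp: a_def m_def)
  interpret C0_slice \<phi> m a
    using C n a by unfold_locales simp_all
  define c where "c = integral\<^sup>L lborel (\<lambda>z. gs a z * gs (a+1) z)"
  have "integrable lborel (\<lambda>x. trace_at i (genker n \<phi> gs (ins_pair a xs x)) w) \<and>
        integral\<^sup>L lborel (\<lambda>x. trace_at i (genker n \<phi> gs (ins_pair a xs x)) w) =
         genker m (trace_integral a m c \<phi>) (\<lambda>k. gs (skip_pair a k)) xs w"
  proof (cases "length xs = m \<and> length w = m")
    case True
    define ys where "ys = map fst xs"
    have ys: "length ys = m" using True by (simp add: ys_def)
    define P where "P = (\<Prod>j<m. gs (skip_pair a j) (snd (xs ! j)))"
    define F where "F y = P * (\<Sum>k\<in>UNIV. \<phi> (ins_pair a ys y) (ins_pair a w k))" for y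
    define G where "G = (\<lambda>z. gs a z * gs (a+1) z)"
    have "(\<Prod>j<n. gs j (snd (ins_pair a xs x ! j))) = P * G (snd x)" for x
      unfolding n using prod_ins_pair[of xs m a "\<lambda>j x. gs j (snd x)" x] True a
      by (simp add: P_def G_def mult_ac)
    then have trace_eq: "trace_at i (genker n \<phi> gs (ins_pair a xs x)) w = F (fst x) * G (snd x)" for x
      unfolding trace_at_ins_pair i_eq[symmetric] a_def[symmetric] using True n
      by (simp add: genker_def map_ins_pair ys_def F_def sum_distrib_left sum_distrib_right mult_ac)
    have F: "integrable lborel F"
      unfolding F_def by (intro integrable_mult_right Bochner_Integration.integrable_sum integrable_slice ys)
    have G: "integrable lborel G"
      unfolding G_def by (rule integrable_mult_L2Z) (use L n a in auto)
    have "integral\<^sup>L lborel F = P * (\<Sum>k\<in>UNIV. integral\<^sup>L lborel (\<lambda>y. \<phi> (ins_pair a ys y) (ins_pair a w k)))"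
      unfolding F_def by (simp add: integrable_slice ys)
    moreover have "c = integral\<^sup>L lborel G"
      by (simp add: c_def G_def)
    ultimately show ?thesis
      unfolding trace_eq using True ys integrable_lborel_prod_mult[OF F G] integral_lborel_prod_mult[OF F G]
      by (simp add: genker_def trace_integral_def ys_def[symmetric] P_def[symmetric] mult_ac)
  next
    case False
    then have "trace_at i (genker n \<phi> gs (ins_pair a xs x)) w = 0" for x
      unfolding trace_at_ins_pair using n by (auto simp: genker_def)
    then show ?thesis using False by (auto simp: genker_def)
  qed
  then show "integrable lborel (\<lambda>x. trace_at i (genker n \<phi> gs (ins_pair (i-1) xs x)) w)"
    and "gker i (genker n \<phi> gs) xs w =
      genker (n-2) (trace_integral (i-1) (n-2) (integral\<^sup>L lborel (\<lambda>z. gs (i-1) z * gs i z)) \<phi>)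
        (\<lambda>k. gs (skip_pair (i-1) k)) xs w"
    unfolding gker_ins_pair by (simp_all add: a_def[symmetric] m_def[symmetric] c_def i_eq)
qed

lemma Fn_gker:
  fixes f :: "('z::finite,'r::finite) kernel"
  assumes f: "f \<in> Fn n" and i: "1 \<le> i" "i < n"
  shows "gker i f \<in> Fn (n-2)"
proof -
  obtain m :: nat and \<phi>s :: "nat \<Rightarrow> real list \<Rightarrow> 'r tens" and gss :: "nat \<Rightarrow> nat \<Rightarrow> real^'z \<Rightarrow> complex"
    where gen: "\<forall>j<m. C0 n (\<phi>s j) \<and> (\<forall>k<n. L2Z (gss j k))"
      and f_eq: "f = (\<lambda>xs w. \<Sum>j<m. genker n (\<phi>s j) (gss j) xs w)"
    using f unfolding Fn_def by blast
  define \<phi>s' where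
    "\<phi>s' j = trace_integral (i-1) (n-2) (integral\<^sup>L lborel (\<lambda>z. gss j (i-1) z * gss j i z)) (\<phi>s j)" for j
  define gss' where "gss' j = (\<lambda>k. gss j (skip_pair (i-1) k))" for j
  have "C0 (n-2) (\<phi>s' j) \<and> (\<forall>k<n-2. L2Z (gss' j k))" if j: "j < m" for j
  proof
    have "n - 2 + 2 = n" "C0 n (\<phi>s j)"
      using gen j i by auto
    then have "C0 (n - 2 + 2) (\<phi>s j)"
      by metis
    then show "C0 (n-2) (\<phi>s' j)"
      unfolding \<phi>s'_def by (rule C0_trace_integral) (use i in simp)
    show "\<forall>k<n-2. L2Z (gss' j k)"
      using gen j i by (auto simp: gss'_def skip_pair_def)
  qed
  moreover have "gker i f = (\<lambda>xs w. \<Sum>j<m. genker (n-2) (\<phi>s' j) (gss' j) xs w)"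
  proof (intro ext)
    fix xs :: "(real \<times> (real^'z)) list" and w :: "'r list"
    have "gker i f xs w =
        integral\<^sup>L lborel (\<lambda>x. \<Sum>j<m. trace_at i (genker n (\<phi>s j) (gss j) (ins_pair (i-1) xs x)) w)"
      unfolding gker_ins_pair f_eq by (simp only: trace_at_sum)
    also have "\<dots> = (\<Sum>j<m. integral\<^sup>L lborel (\<lambda>x. trace_at i (genker n (\<phi>s j) (gss j) (ins_pair (i-1) xs x)) w))"
      using gen i by (intro Bochner_Integration.integral_sum integrable_trace_genker) auto
    also have "\<dots> = (\<Sum>j<m. genker (n-2) (\<phi>s' j) (gss' j) xs w)"
    proof (rule sum.cong[OF refl])
      fix j assume "j \<in> {..<m}"
      then show "integral\<^sup>L lborel (\<lambda>x. trace_at i (genker n (\<phi>s j) (gss j) (ins_pair (i-1) xs x)) w)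
          = genker (n-2) (\<phi>s' j) (gss' j) xs w"
        using gker_genker[of n "\<phi>s j" "gss j" i xs w] gen i unfolding gker_ins_pair \<phi>s'_def gss'_def by auto
    qed
    finally show "gker i f xs w = (\<Sum>j<m. genker (n-2) (\<phi>s' j) (gss' j) xs w)" .
  qed
  ultimately show ?thesis unfolding Fn_def by blast
qed

section \<open>The exchange relation for the sign pattern (+,-)\<close>

lemma kop_kswap_kop_kswap_inverse:
  fixes A B :: "real \<Rightarrow> real \<Rightarrow> ('r::finite) op2" and f :: "('z::finite, 'r) kernel"
  assumes AB: "\<And>y1 y2. A y1 y2 ** B y1 y2 = mat 1"
    and f: "\<And>xs w. length xs \<noteq> n \<or> length w \<noteq> n \<Longrightarrow> f xs w = 0" and i: "1 \<le> i" "i < n"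
  shows "kop (\<lambda>x1 x2. A (fst x2) (fst x1)) i (kswap i (kop (\<lambda>x1 x2. B (fst x1) (fst x2)) i (kswap i f))) = f"
proof (intro ext)
  fix xs :: "(real \<times> (real^'z)) list" and w :: "'r list"
  show "kop (\<lambda>x1 x2. A (fst x2) (fst x1)) i (kswap i (kop (\<lambda>x1 x2. B (fst x1) (fst x2)) i (kswap i f))) xs w
      = f xs w"
  proof (cases "length xs = n \<and> length w = n")
    case True
    have "kswap i (kop (\<lambda>x1 x2. B (fst x1) (fst x2)) i (kswap i f)) xs
        = act_at (B (fst (xs ! i)) (fst (xs ! (i-1)))) i (f xs)"
      unfolding kswap_def kop_def using True i by (simp add: nth_swap_at swap_index_def swap_at_swap_at)
    then show ?thesis
      unfolding kop_def using True i by (simp add: act_at_act_at AB act_at_mat_1)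
  next
    case False
    then have "kswap i (kop (\<lambda>x1 x2. B (fst x1) (fst x2)) i (kswap i f)) xs u = 0" if "length u = length w" for u
      unfolding kswap_def kop_def using that by (intro act_at_eq_0 f) auto
    then show ?thesis
      unfolding kop_def using False f by (simp add: act_at_eq_0)
  qed
qed

text \<open>g only sees the diagonal x_i = x_{i+1}, where exchanging the two variables does
  nothing.\<close>
lemma gker_kop_kswap:
  fixes M :: "real \<Rightarrow> real \<Rightarrow> ('r::finite) op2" and f :: "('z::finite, 'r) kernel"
  assumes M: "\<And>y v. Tr2 (M y y *v v) = c * Tr2 v"
    and f: "\<And>xs w. length xs \<noteq> n \<or> length w \<noteq> n \<Longrightarrow> f xs w = 0" and i: "1 \<le> i" "i < n"
  shows "gker i (kop (\<lambda>x1 x2. M (fst x1) (fst x2)) i (kswap i f)) = kscale c (gker i f)"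
proof (intro ext)
  fix xs :: "(real \<times> (real^'z)) list" and w :: "'r list"
  have "trace_at i (kop (\<lambda>x1 x2. M (fst x1) (fst x2)) i (kswap i f) (ins_pair (i-1) xs x)) w
      = c * trace_at i (f (ins_pair (i-1) xs x)) w" for x
  proof (cases "i - 1 \<le> length xs \<and> i - 1 \<le> length w")
    case True
    let ?L = "ins_pair (i-1) xs x"
    have L: "?L ! (i-1) = x" "?L ! i = x"
      using True i by (auto simp: nth_ins_pair)
    then have "swap_at i ?L = ?L"
      unfolding swap_at_def by (metis list_update_id)
    then have "kop (\<lambda>x1 x2. M (fst x1) (fst x2)) i (kswap i f) ?L = act_at (M (fst x) (fst x)) i (f ?L)"
      unfolding kop_def kswap_def L by simp
    then show ?thesis
      using trace_at_act_at[of "M (fst x) (fst x)" c i w] M i True by simp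
  next
    case False
    then have "f zs u = 0" if "length zs = length xs + 2" "length u = length w + 2" for zs u
      using i that by (intro f) auto
    then show ?thesis
      unfolding kop_def kswap_def trace_at_ins_pair by (simp add: act_at_eq_0)
  qed
  then show "gker i (kop (\<lambda>x1 x2. M (fst x1) (fst x2)) i (kswap i f)) xs w = kscale c (gker i f) xs w"
    unfolding gker_ins_pair kscale_def by simp
qed

theorem proposition2p3:
  fixes Q :: "real \<Rightarrow> real \<Rightarrow> ('r::finite) op2"
    and sc :: "complex \<Rightarrow> 'a::ring_1 \<Rightarrow> 'a" and st :: "'a \<Rightarrow> 'a"
    and \<Phi> :: "('z::finite, 'r) kernel \<Rightarrow> bool list \<Rightarrow> 'a"
    and \<kappa> :: real and ss :: "bool list" and i :: nat and f :: "('z, 'r) kernel"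
  assumes "Q_admissible Q"
    and "QMCR_algebra Q sc st \<Phi>"
    and "\<forall>y1 y2. invertible (Qtilde (Q y1 y2))"
    and "\<forall>y v. Tr2 (matrix_inv (Qtilde (Q y y)) *v v) = complex_of_real \<kappa> * Tr2 v"
    and "1 \<le> i" and "i < length ss" and "ss ! (i-1)" and "\<not> ss ! i"
    and "f \<in> Fn (length ss)"
  shows "\<Phi> f ss =
           \<Phi> (kop (\<lambda>x1 x2. matrix_inv (Qtilde (Q (fst x1) (fst x2)))) i (kswap i f)) (swap_at i ss)
           - sc (complex_of_real \<kappa>) (\<Phi> (gker i f) (del2_at i ss))"
proof -
  note i = assms(5,6) and f = assms(9)
  define h where "h = kop (\<lambda>x1 x2. matrix_inv (Qtilde (Q (fst x1) (fst x2)))) i (kswap i f)"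
  have h: "h \<in> Fn (length (swap_at i ss))"
    unfolding h_def using Fn_kop_kswap[OF continuous_on_matrix_inv_Qtilde[OF assms(1,3)] f i] by simp
  have g: "gker i f \<in> Fn (length (del2_at i ss))"
    using Fn_gker[OF f i] length_del2_at[OF i] by simp
  have signs: "\<not> swap_at i ss ! (i-1)" "swap_at i ss ! i"
    using assms(5-8) by (simp_all add: nth_swap_at swap_index_def)
  have "\<Phi> h (swap_at i ss) =
      \<Phi> (kop (\<lambda>x1 x2. Qtilde (Q (fst x2) (fst x1))) i (kswap i h)) (swap_at i (swap_at i ss))
      + \<Phi> (gker i h) (del2_at i (swap_at i ss))"
    using assms(2) h i signs unfolding QMCR_algebra_def by simp
  also have "kop (\<lambda>x1 x2. Qtilde (Q (fst x2) (fst x1))) i (kswap i h) = f"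
    unfolding h_def using assms(3) Fn_eq_0[OF f] i
    by (intro kop_kswap_kop_kswap_inverse[where n = "length ss"]) (auto simp: invertible_matrix_inv)
  also have "gker i h = kscale (complex_of_real \<kappa>) (gker i f)"
    unfolding h_def using assms(4) Fn_eq_0[OF f] i by (intro gker_kop_kswap[where n = "length ss"]) auto
  also have "\<Phi> (kscale (complex_of_real \<kappa>) (gker i f)) (del2_at i (swap_at i ss))
      = sc (complex_of_real \<kappa>) (\<Phi> (gker i f) (del2_at i ss))"
    using assms(2) g i unfolding QMCR_algebra_def by (simp add: del2_at_swap_at)
  finally show ?thesis
    unfolding h_def using i by (simp add: swap_at_swap_at algebra_simps)
qed

end
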